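(* Let $k$ be a field of characteristic $0$, $V$ a $k$-module, and $L=(\mathcal{L}ie(\mathcal{M}ag(V)),\circ,[\,,\,])$ the free PostLie algebra on $V$. The right $\mathcal U(L_{\{,\}})$-module $\mathcal{M}ag(V)$ is isomorphic to the free right $\mathcal U(L_{\{,\}})$-module generated by $V$: $$\mathcal{M}ag(V)\cong V\otimes\mathcal U(L_{\{,\}}).$$
   Context: A PostLie algebra is a $k$-module with operations $\circ$, $[\,,\,]$, $[\,,\,]$ a Lie bracket, satisfying $(x\circ y)\circ z-x\circ(y\circ z)-(x\circ z)\circ y+x\circ(z\circ y)=x\circ[y,z]$ and $[x,y]\circ z=[x\circ z,y]+[x,y\circ z]$. The free PostLie algebra on $V$ has underlying module $\mathcal{L}ie(\mathcal{M}ag(V))$, the free Lie algebra on the free magmatic algebra $\mathcal{M}ag(V)$, with $[\,,\,]$ the free Lie bracket; $\mathcal{M}ag(V)\subset L$ (weight-one part in the Lie direction) and on $\mathcal{M}ag(V)$ the operation $\circ$ is the free magmatic product. $L_{\{,\}}$ is the Lie algebra $(L,\{\,,\,\})$ with $\{x,y\}=x\circ y-y\circ x+[x,y]$; $L$ is a right $L_{\{,\}}$-module via $(x,y)\mapsto x\circ y$, extended to a right action $\star$ of the universal enveloping algebra $\mathcal U(L_{\{,\}})$ by $g\star(v_1\otimes\cdots\otimes v_n)=((g\circ v_1)\cdots)\circ v_n$. The submodule $\mathcal{M}ag(V)\subset L$ is stable under this action, hence is a right $\mathcal U(L_{\{,\}})$-module. *)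

theory Defs
  imports Main "HOL-Library.Poly_Mapping"
begin

text \<open>Free magma on a basis type 'x: planar binary trees with leaves in 'x.
  The k-vector space V is taken to be the free vector space on 'x (every vector
  space over a field has a basis).\<close>
datatype 'x mag = Leaf 'x | Node "'x mag" "'x mag"

definition sm :: "'k::semiring_0 \<Rightarrow> ('a \<Rightarrow>\<^sub>0 'k) \<Rightarrow> ('a \<Rightarrow>\<^sub>0 'k)" where
  "sm c p = Poly_Mapping.map (\<lambda>a. c * a) p"

text \<open>Concatenation product on the free associative algebra ('a list =>0 'k).
  With 'a = 'x mag this is the tensor algebra T(Mag(V)).\<close>
definition tmul :: "('a list \<Rightarrow>\<^sub>0 'k::semiring_0) \<Rightarrow> ('a list \<Rightarrow>\<^sub>0 'k) \<Rightarrow> ('a list \<Rightarrow>\<^sub>0 'k)" where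
  "tmul p q = (\<Sum>a\<in>Poly_Mapping.keys p. \<Sum>b\<in>Poly_Mapping.keys q. Poly_Mapping.single (a @ b) (Poly_Mapping.lookup p a * Poly_Mapping.lookup q b))"

definition comm :: "('a list \<Rightarrow>\<^sub>0 'k::ring) \<Rightarrow> ('a list \<Rightarrow>\<^sub>0 'k) \<Rightarrow> ('a list \<Rightarrow>\<^sub>0 'k)" where
  "comm p q = tmul p q - tmul q p"

text \<open>Mag(V) inside T(Mag(V)): the degree-one part (span of one-letter words).\<close>
definition magset :: "('x mag list \<Rightarrow>\<^sub>0 'k::zero) set" where
  "magset = {p. \<forall>w\<in>Poly_Mapping.keys p. length w = 1}"

text \<open>Lie(Mag(V)): the free Lie algebra on Mag(V), realised as the Lie subalgebra of
  T(Mag(V)) generated by Mag(V) (Lie polynomials), with bracket the commutator.\<close>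
inductive_set lieset :: "('x mag list \<Rightarrow>\<^sub>0 'k::field) set" where
  gen: "Poly_Mapping.single [t] c \<in> lieset"
| add: "a \<in> lieset \<Longrightarrow> b \<in> lieset \<Longrightarrow> a + b \<in> lieset"
| scal: "a \<in> lieset \<Longrightarrow> sm c a \<in> lieset"
| brk: "a \<in> lieset \<Longrightarrow> b \<in> lieset \<Longrightarrow> comm a b \<in> lieset"

definition free_postlie :: "(('x mag list \<Rightarrow>\<^sub>0 'k::field) \<Rightarrow> ('x mag list \<Rightarrow>\<^sub>0 'k) \<Rightarrow> ('x mag list \<Rightarrow>\<^sub>0 'k)) \<Rightarrow> bool" where
  "free_postlie circ \<longleftrightarrow>
     (\<forall>x\<in>lieset. \<forall>y\<in>lieset. circ x y \<in> lieset) \<and>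
     (\<forall>x\<in>lieset. \<forall>y\<in>lieset. \<forall>z\<in>lieset. \<forall>c.
         circ (x + y) z = circ x z + circ y z \<and>
         circ z (x + y) = circ z x + circ z y \<and>
         circ (sm c x) z = sm c (circ x z) \<and>
         circ z (sm c x) = sm c (circ z x)) \<and>
     (\<forall>x\<in>lieset. \<forall>y\<in>lieset. \<forall>z\<in>lieset.
         circ (circ x y) z - circ x (circ y z) - circ (circ x z) y + circ x (circ z y)
           = circ x (comm y z)) \<and>
     (\<forall>x\<in>lieset. \<forall>y\<in>lieset. \<forall>z\<in>lieset.
         circ (comm x y) z = comm (circ x z) y + comm x (circ y z)) \<and>
     (\<forall>s t. circ (Poly_Mapping.single [s] 1) (Poly_Mapping.single [t] 1)
              = Poly_Mapping.single [Node s t] 1)"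

definition pbr :: "('l \<Rightarrow> 'l \<Rightarrow> 'l) \<Rightarrow> ('l \<Rightarrow> 'l \<Rightarrow> 'l) \<Rightarrow> 'l \<Rightarrow> 'l \<Rightarrow> ('l::ab_group_add)" where
  "pbr circ br x y = circ x y - circ y x + br x y"

text \<open>Universal enveloping algebra U(L_{,}) = F / I, where F is the free associative
  k-algebra on the set L (finitely supported functions on words in L) and I is the
  two-sided ideal generated by linearity relations and xy - yx - {x,y}.
  I is spanned by the relations multiplied on both sides by words.\<close>
definition wordsL :: "(('x mag list \<Rightarrow>\<^sub>0 'k::field) list \<Rightarrow>\<^sub>0 'k) set" where
  "wordsL = {f. \<forall>w\<in>Poly_Mapping.keys f. set w \<subseteq> lieset}"

inductive_set uideal for circ :: "('x mag list \<Rightarrow>\<^sub>0 'k::field) \<Rightarrow> ('x mag list \<Rightarrow>\<^sub>0 'k) \<Rightarrow> ('x mag list \<Rightarrow>\<^sub>0 'k)" where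
  lin_add: "set a \<subseteq> lieset \<Longrightarrow> set b \<subseteq> lieset \<Longrightarrow> l1 \<in> lieset \<Longrightarrow> l2 \<in> lieset \<Longrightarrow>
     Poly_Mapping.single (a @ [l1 + l2] @ b) 1 - Poly_Mapping.single (a @ [l1] @ b) 1
       - Poly_Mapping.single (a @ [l2] @ b) 1 \<in> uideal circ"
| lin_sm: "set a \<subseteq> lieset \<Longrightarrow> set b \<subseteq> lieset \<Longrightarrow> l \<in> lieset \<Longrightarrow>
     Poly_Mapping.single (a @ [sm c l] @ b) 1 - Poly_Mapping.single (a @ [l] @ b) c \<in> uideal circ"
| lie_rel: "set a \<subseteq> lieset \<Longrightarrow> set b \<subseteq> lieset \<Longrightarrow> l1 \<in> lieset \<Longrightarrow> l2 \<in> lieset \<Longrightarrow>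
     Poly_Mapping.single (a @ [l1, l2] @ b) 1 - Poly_Mapping.single (a @ [l2, l1] @ b) 1
       - Poly_Mapping.single (a @ [pbr circ comm l1 l2] @ b) 1 \<in> uideal circ"
| zero: "0 \<in> uideal circ"
| add: "p \<in> uideal circ \<Longrightarrow> q \<in> uideal circ \<Longrightarrow> p + q \<in> uideal circ"
| scal: "p \<in> uideal circ \<Longrightarrow> sm c p \<in> uideal circ"

definition actF :: "(('a \<Rightarrow>\<^sub>0 'k::semiring_0) \<Rightarrow> ('a \<Rightarrow>\<^sub>0 'k) \<Rightarrow> ('a \<Rightarrow>\<^sub>0 'k)) \<Rightarrow> ('a \<Rightarrow>\<^sub>0 'k) \<Rightarrow> (('a \<Rightarrow>\<^sub>0 'k) list \<Rightarrow>\<^sub>0 'k) \<Rightarrow> ('a \<Rightarrow>\<^sub>0 'k)" where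
  "actF circ g f = (\<Sum>w\<in>Poly_Mapping.keys f. sm (Poly_Mapping.lookup f w) (foldl circ g w))"

text \<open>The canonical map V \<otimes> F \<rightarrow> Mag(V), (u_x)_x \<mapsto> \<Sum>_x x \<star> u_x, where an element of
  V \<otimes> F is a finitely supported family indexed by the basis 'x of V.\<close>
definition canmap :: "(('x mag list \<Rightarrow>\<^sub>0 'k::field) \<Rightarrow> ('x mag list \<Rightarrow>\<^sub>0 'k) \<Rightarrow> ('x mag list \<Rightarrow>\<^sub>0 'k))
    \<Rightarrow> ('x \<Rightarrow>\<^sub>0 (('x mag list \<Rightarrow>\<^sub>0 'k) list \<Rightarrow>\<^sub>0 'k)) \<Rightarrow> ('x mag list \<Rightarrow>\<^sub>0 'k)" where
  "canmap circ u = (\<Sum>x\<in>Poly_Mapping.keys u. actF circ (Poly_Mapping.single [Leaf x] 1) (Poly_Mapping.lookup u x))"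

end

theory Submission
  imports Defs "HOL.Modules"
begin

text \<open>
  The map x \<otimes> w \<mapsto> x \<star> w is onto Mag(V) because every tree t is the left comb
  (\<dots>((x \<circ> t1) \<circ> t2) \<dots>) \<circ> tn over its leftmost leaf x, and it vanishes on V \<otimes> I because
  L is a right L_{,}-module. Conversely, for each generator y let spine_map y send such a comb with
  x = y to the word [t1, \<dots>, tn] and every other tree to 0. Modulo I one has
  spine_map y (t \<circ> l) = spine_map y t \<cdot> l for all trees t and all l in L: for a bracket
  l = [A, B] this follows by induction on the bracket degree from the first PostLie axiom and the
  relation AB - BA = {A, B} of U(L_{,}), using that the right action preserves the bracket degree,
  so that Mag(V) is stable. Hence spine_map y (x \<star> w) = \<delta>(x, y) w in U(L_{,}), which recovers
  the coefficients of an element of the kernel.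
\<close>

type_synonym ('x, 'k) tensor = "'x mag list \<Rightarrow>\<^sub>0 'k"
type_synonym ('x, 'k) free_alg = "('x, 'k) tensor list \<Rightarrow>\<^sub>0 'k"

section \<open>Linear algebra of finitely supported functions\<close>

lemma lookup_sm [simp]: "Poly_Mapping.lookup (sm c p) w = c * Poly_Mapping.lookup p w"
  by (simp add: sm_def Poly_Mapping.map.rep_eq when_def)

lemma sm_single: "sm c (Poly_Mapping.single w a) = Poly_Mapping.single w (c * a)"
  by (rule poly_mapping_eqI) (simp add: lookup_single when_def)

interpretation sm: module "sm :: 'k::comm_ring_1 \<Rightarrow> ('a \<Rightarrow>\<^sub>0 'k) \<Rightarrow> ('a \<Rightarrow>\<^sub>0 'k)"
  by unfold_locales (auto intro!: poly_mapping_eqI simp: lookup_add algebra_simps)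

interpretation sm_pair: module_pair
  "sm :: 'k::comm_ring_1 \<Rightarrow> ('a \<Rightarrow>\<^sub>0 'k) \<Rightarrow> ('a \<Rightarrow>\<^sub>0 'k)"
  "sm :: 'k \<Rightarrow> ('b \<Rightarrow>\<^sub>0 'k) \<Rightarrow> ('b \<Rightarrow>\<^sub>0 'k)" ..

lemma sum_single_lookup:
  "(\<Sum>w\<in>Poly_Mapping.keys p. Poly_Mapping.single w (Poly_Mapping.lookup p w)) = p"
proof (rule poly_mapping_eqI)
  fix v
  have "(\<Sum>w\<in>Poly_Mapping.keys p.
          Poly_Mapping.lookup (Poly_Mapping.single w (Poly_Mapping.lookup p w)) v)
      = (\<Sum>w\<in>Poly_Mapping.keys p. if w = v then Poly_Mapping.lookup p v else 0)"
    by (rule sum.cong) (auto simp: lookup_single)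
  then show "Poly_Mapping.lookup
      (\<Sum>w\<in>Poly_Mapping.keys p. Poly_Mapping.single w (Poly_Mapping.lookup p w)) v
      = Poly_Mapping.lookup p v"
    by (simp add: lookup_sum in_keys_iff)
qed

definition lin_ext :: "('a \<Rightarrow> ('b \<Rightarrow>\<^sub>0 'k::comm_ring_1)) \<Rightarrow> ('a \<Rightarrow>\<^sub>0 'k) \<Rightarrow> ('b \<Rightarrow>\<^sub>0 'k)" where
  "lin_ext g p = (\<Sum>w\<in>Poly_Mapping.keys p. sm (Poly_Mapping.lookup p w) (g w))"

lemma lin_ext_superset:
  assumes "finite S" "Poly_Mapping.keys p \<subseteq> S"
  shows "lin_ext g p = (\<Sum>w\<in>S. sm (Poly_Mapping.lookup p w) (g w))"
  unfolding lin_ext_def by (rule sum.mono_neutral_left) (use assms in \<open>auto simp: in_keys_iff\<close>)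

lemma module_hom_lin_ext: "module_hom sm sm (lin_ext g)"
proof unfold_locales
  show "lin_ext g (p + q) = lin_ext g p + lin_ext g q" for p q
  proof -
    let ?S = "Poly_Mapping.keys p \<union> Poly_Mapping.keys q"
    have "Poly_Mapping.keys (p + q) \<subseteq> ?S" by (rule keys_add)
    then show ?thesis
      by (simp add: lin_ext_superset[of ?S] lookup_add sm.scale_left_distrib sum.distrib)
  qed
  show "lin_ext g (sm c p) = sm c (lin_ext g p)" for c p
  proof -
    have "Poly_Mapping.keys (sm c p) \<subseteq> Poly_Mapping.keys p" by (auto simp: in_keys_iff)
    then have "lin_ext g (sm c p)
        = (\<Sum>w\<in>Poly_Mapping.keys p. sm c (sm (Poly_Mapping.lookup p w) (g w)))"
      by (simp add: lin_ext_superset[of "Poly_Mapping.keys p"])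
    then show ?thesis
      by (simp only: lin_ext_def[of g p] sm.scale_sum_right)
  qed
qed

lemma lin_ext_single [simp]: "lin_ext g (Poly_Mapping.single w c) = sm c (g w)"
  by (cases "c = 0") (simp_all add: lin_ext_def)

lemma tmul_lin_ext_left:
  "tmul p q = lin_ext (\<lambda>a. lin_ext (\<lambda>b. Poly_Mapping.single (a @ b) 1) q) p"
  by (simp add: tmul_def lin_ext_def sm.scale_sum_right sm_single)

lemma tmul_lin_ext_right:
  "tmul p q = lin_ext (\<lambda>b. lin_ext (\<lambda>a. Poly_Mapping.single (a @ b) 1) p) q"
  unfolding tmul_def lin_ext_def
  by (subst sum.swap) (simp add: sm.scale_sum_right sm_single mult.commute)

lemma tmul_single_single:
  "tmul (Poly_Mapping.single a c) (Poly_Mapping.single b d)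
    = Poly_Mapping.single (a @ b) (c * d :: 'k::comm_ring_1)"
  by (simp add: tmul_lin_ext_left sm_single)

lemma module_hom_tmul_left: "module_hom sm sm (\<lambda>p. tmul p q)"
  unfolding tmul_lin_ext_left by (rule module_hom_lin_ext)

lemma module_hom_tmul_right: "module_hom sm sm (tmul p)"
  unfolding tmul_lin_ext_right[abs_def] by (rule module_hom_lin_ext)

lemma module_hom_comm_left: "module_hom sm sm (\<lambda>p. comm p q)"
  unfolding comm_def by (intro sm_pair.module_hom_sub module_hom_tmul_left module_hom_tmul_right)

lemma module_hom_comm_right: "module_hom sm sm (comm p)"
  unfolding comm_def by (intro sm_pair.module_hom_sub module_hom_tmul_left module_hom_tmul_right)

lemma comm_span:
  assumes "p \<in> sm.span A" "q \<in> sm.span B" "\<And>a b. a \<in> A \<Longrightarrow> b \<in> B \<Longrightarrow> comm a b \<in> sm.span C"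
  shows "comm p q \<in> sm.span C"
proof -
  have "B \<subseteq> {q. comm a q \<in> sm.span C}" if "a \<in> A" for a
    using assms(3) that by blast
  then have "sm.span B \<subseteq> {q. comm a q \<in> sm.span C}" if "a \<in> A" for a
    using that module_hom.subspace_vimage[OF module_hom_comm_right sm.subspace_span]
    by (intro sm.span_minimal) (auto simp: vimage_def)
  then have "A \<subseteq> {p. comm p q \<in> sm.span C}"
    using assms(2) by blast
  then have "sm.span A \<subseteq> {p. comm p q \<in> sm.span C}"
    using module_hom.subspace_vimage[OF module_hom_comm_left sm.subspace_span]
    by (intro sm.span_minimal) (auto simp: vimage_def)
  then show ?thesis using assms(1) by blast
qed

lemma linear_on_span_mem:
  assumes "sm.subspace L" "A \<subseteq> L" "sm.subspace T"
    and "\<And>x y. x \<in> L \<Longrightarrow> y \<in> L \<Longrightarrow> f (x + y) = f x + f y"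
    and "\<And>c x. x \<in> L \<Longrightarrow> f (sm c x) = sm c (f x)"
    and "\<And>a. a \<in> A \<Longrightarrow> f a \<in> T" "p \<in> sm.span A"
  shows "f p \<in> T"
proof -
  have "f 0 = 0"
    using assms(5)[of 0 0] sm.subspace_0[OF assms(1)] by simp
  then have "sm.subspace {x \<in> L. f x \<in> T}"
    using assms(1,3-5) by (auto simp: sm.subspace_def)
  then have "sm.span A \<subseteq> {x \<in> L. f x \<in> T}"
    using assms(2,6) by (intro sm.span_minimal) auto
  then show ?thesis using assms(7) by blast
qed

section \<open>Lie polynomials\<close>

lemma subspace_lieset: "sm.subspace lieset"
proof -
  have "sm 0 (Poly_Mapping.single [t] 1) \<in> lieset" for t
    by (intro lieset.scal lieset.gen)
  then show ?thesis
    unfolding sm.subspace_def by (auto intro: lieset.add lieset.scal)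
qed

lemmas lieset_zero = sm.subspace_0[OF subspace_lieset]
  and lieset_diff = sm.subspace_diff[OF subspace_lieset]

definition tree :: "'x mag \<Rightarrow> ('x, 'k::field) tensor" where
  "tree t = Poly_Mapping.single [t] 1"

lemma tree_lieset: "tree t \<in> lieset"
  unfolding tree_def by (rule lieset.gen)

datatype 'a bracket = Gen 'a | Brk "'a bracket" "'a bracket"

fun bracket_eval :: "'x mag bracket \<Rightarrow> ('x, 'k::field) tensor" where
  "bracket_eval (Gen t) = tree t"
| "bracket_eval (Brk a b) = comm (bracket_eval a) (bracket_eval b)"

fun bracket_degree :: "'a bracket \<Rightarrow> nat" where
  "bracket_degree (Gen t) = 1"
| "bracket_degree (Brk a b) = bracket_degree a + bracket_degree b"

lemma bracket_degree_pos: "0 < bracket_degree e"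
  by (induction e) auto

lemma bracket_degree_1_iff: "bracket_degree e = 1 \<longleftrightarrow> (\<exists>t. e = Gen t)"
proof (cases e)
  case (Brk a b)
  with bracket_degree_pos[of a] bracket_degree_pos[of b] show ?thesis by simp
qed simp

lemma bracket_eval_lieset: "bracket_eval e \<in> lieset"
  by (induction e) (auto simp: tree_lieset intro: lieset.brk)

lemma lieset_eq_span: "(lieset :: ('x, 'k::field) tensor set) = sm.span (range bracket_eval)"
  (is "?L = ?R")
proof
  show "?R \<subseteq> ?L"
    by (rule sm.span_minimal) (auto simp: bracket_eval_lieset subspace_lieset)
  show "?L \<subseteq> ?R"
  proof
    fix l assume "l \<in> ?L"
    then show "l \<in> ?R"
    proof induction
      case (gen t c)
      have "sm c (bracket_eval (Gen t)) \<in> sm.span (range bracket_eval)"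
        by (intro sm.span_scale sm.span_base rangeI)
      then show ?case by (simp add: tree_def sm_single)
    next
      case (brk a b)
      have "comm (bracket_eval e1) (bracket_eval e2) \<in> sm.span (range bracket_eval)" for e1 e2
        using sm.span_base[OF rangeI[of bracket_eval "Brk e1 e2"]] by simp
      then show ?case
        by (intro comm_span[OF brk.IH]) auto
    qed (auto intro: sm.span_add sm.span_scale)
  qed
qed

definition lie_homog :: "nat \<Rightarrow> ('x, 'k::field) tensor set" where
  "lie_homog k = sm.span (bracket_eval ` {e. bracket_degree e = k})"

lemma subspace_lie_homog: "sm.subspace (lie_homog k)"
  by (simp add: lie_homog_def)

lemma lie_homog_lieset: "lie_homog k \<subseteq> lieset"
  unfolding lie_homog_def by (rule sm.span_minimal) (auto simp: bracket_eval_lieset subspace_lieset)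

lemma bracket_eval_lie_homog: "bracket_eval e \<in> lie_homog (bracket_degree e)"
  unfolding lie_homog_def by (rule sm.span_base) auto

lemma tree_lie_homog: "tree t \<in> lie_homog 1"
  using bracket_eval_lie_homog[of "Gen t"] by simp

lemma comm_lie_homog:
  fixes p q :: "('x, 'k::field) tensor"
  assumes "p \<in> lie_homog i" "q \<in> lie_homog j"
  shows "comm p q \<in> lie_homog (i + j)"
  using assms unfolding lie_homog_def
proof (rule comm_span)
  fix a b :: "('x, 'k) tensor"
  assume "a \<in> bracket_eval ` {e. bracket_degree e = i}"
    and "b \<in> bracket_eval ` {e. bracket_degree e = j}"
  then obtain e1 e2 where "a = bracket_eval e1" "bracket_degree e1 = i"
    and "b = bracket_eval e2" "bracket_degree e2 = j"
    by auto
  then have "comm a b = bracket_eval (Brk e1 e2)" "bracket_degree (Brk e1 e2) = i + j" by auto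
  then show "comm a b \<in> sm.span (bracket_eval ` {e. bracket_degree e = i + j})"
    by (intro sm.span_base) (auto simp del: bracket_eval.simps)
qed

lemma lie_homog_1: "lie_homog 1 = sm.span (range tree)"
proof -
  have degree_1: "{e. bracket_degree e = 1} = range Gen"
    using bracket_degree_1_iff by auto
  show ?thesis
    unfolding lie_homog_def degree_1 image_image by simp
qed

section \<open>PostLie algebras\<close>

locale free_postlie_algebra =
  fixes circ :: "('x, 'k::field) tensor \<Rightarrow> ('x, 'k) tensor \<Rightarrow> ('x, 'k) tensor"
  assumes free_postlie: "free_postlie circ"
begin

lemma circ_lieset: "x \<in> lieset \<Longrightarrow> y \<in> lieset \<Longrightarrow> circ x y \<in> lieset"
  using free_postlie unfolding free_postlie_def by blast

lemma circ_add_left: "x \<in> lieset \<Longrightarrow> y \<in> lieset \<Longrightarrow> z \<in> lieset \<Longrightarrow> circ (x + y) z = circ x z + circ y z"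
  using free_postlie unfolding free_postlie_def by blast

lemma circ_add_right: "x \<in> lieset \<Longrightarrow> y \<in> lieset \<Longrightarrow> z \<in> lieset \<Longrightarrow> circ z (x + y) = circ z x + circ z y"
  using free_postlie unfolding free_postlie_def by blast

lemma circ_sm_left: "x \<in> lieset \<Longrightarrow> z \<in> lieset \<Longrightarrow> circ (sm c x) z = sm c (circ x z)"
  using free_postlie lieset_zero unfolding free_postlie_def by blast

lemma circ_sm_right: "x \<in> lieset \<Longrightarrow> z \<in> lieset \<Longrightarrow> circ z (sm c x) = sm c (circ z x)"
  using free_postlie lieset_zero unfolding free_postlie_def by blast

lemma circ_comm_right:
  "x \<in> lieset \<Longrightarrow> y \<in> lieset \<Longrightarrow> z \<in> lieset \<Longrightarrow>
   circ (circ x y) z - circ x (circ y z) - circ (circ x z) y + circ x (circ z y)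
     = circ x (comm y z)"
  using free_postlie unfolding free_postlie_def by blast

lemma circ_comm_left:
  "x \<in> lieset \<Longrightarrow> y \<in> lieset \<Longrightarrow> z \<in> lieset \<Longrightarrow>
   circ (comm x y) z = comm (circ x z) y + comm x (circ y z)"
  using free_postlie unfolding free_postlie_def by blast

lemma circ_tree: "circ (tree s) (tree t) = tree (Node s t)"
  using free_postlie unfolding free_postlie_def tree_def by blast

lemma circ_zero_right: "z \<in> lieset \<Longrightarrow> circ z 0 = 0"
  using circ_sm_right[OF lieset_zero, of z 0] by simp

lemma circ_diff_right:
  assumes "x \<in> lieset" "y \<in> lieset" "z \<in> lieset"
  shows "circ z (x - y) = circ z x - circ z y"
  using circ_add_right[OF assms(1) lieset.scal[OF assms(2)] assms(3), of "-1"]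
    circ_sm_right[OF assms(2,3), of "-1"]
  by simp

lemma circ_span_left:
  assumes "p \<in> sm.span A" "A \<subseteq> lieset" "z \<in> lieset" "sm.subspace T"
    and "\<And>a. a \<in> A \<Longrightarrow> circ a z \<in> T"
  shows "circ p z \<in> T"
  by (rule linear_on_span_mem[OF subspace_lieset assms(2,4) _ _ assms(5,1)])
    (simp_all add: circ_add_left circ_sm_left assms(3))

lemma circ_span_right:
  assumes "p \<in> sm.span A" "A \<subseteq> lieset" "z \<in> lieset" "sm.subspace T"
    and "\<And>a. a \<in> A \<Longrightarrow> circ z a \<in> T"
  shows "circ z p \<in> T"
  by (rule linear_on_span_mem[OF subspace_lieset assms(2,4) _ _ assms(5,1)])
    (simp_all add: circ_add_right circ_sm_right assms(3))

lemma circ_tree_lie_homog: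
  assumes "M \<in> lie_homog k"
  shows "circ M (tree s) \<in> lie_homog k"
proof -
  have monomial: "circ (bracket_eval e) (tree s) \<in> lie_homog (bracket_degree e)" for e
  proof (induction e)
    case (Gen t)
    show ?case using tree_lie_homog by (simp add: circ_tree)
  next
    case (Brk a b)
    have "circ (bracket_eval (Brk a b)) (tree s)
        = comm (circ (bracket_eval a) (tree s)) (bracket_eval b)
          + comm (bracket_eval a) (circ (bracket_eval b) (tree s))"
      using circ_comm_left[OF bracket_eval_lieset bracket_eval_lieset tree_lieset] by simp
    then show ?case
      using comm_lie_homog[OF Brk.IH(1) bracket_eval_lie_homog]
        comm_lie_homog[OF bracket_eval_lie_homog Brk.IH(2)]
      by (simp add: sm.subspace_add[OF subspace_lie_homog])
  qed
  from assms have "M \<in> sm.span (bracket_eval ` {e. bracket_degree e = k})"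
    by (simp add: lie_homog_def)
  then show ?thesis
    by (rule circ_span_left)
      (use monomial in \<open>auto simp: bracket_eval_lieset tree_lieset subspace_lie_homog\<close>)
qed

text \<open>The first PostLie axiom expresses M \<circ> [A, B] through right actions by A, B,
  A \<circ> B and B \<circ> A, all of smaller bracket degree.\<close>
lemma circ_bracket_lie_homog: "M \<in> lie_homog k \<Longrightarrow> circ M (bracket_eval e) \<in> lie_homog k"
proof (induction "bracket_degree e" arbitrary: e k M rule: less_induct)
  case less
  show ?case
  proof (cases e)
    case (Gen s)
    with less.prems show ?thesis by (simp add: circ_tree_lie_homog)
  next
    case (Brk a b)
    let ?A = "bracket_eval a" and ?B = "bracket_eval b"
    have smaller: "bracket_degree a < bracket_degree e" "bracket_degree b < bracket_degree e"
      using Brk bracket_degree_pos[of a] bracket_degree_pos[of b] by auto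
    have IH: "circ N (bracket_eval e') \<in> lie_homog j"
      if "N \<in> lie_homog j" "bracket_degree e' < bracket_degree e" for N j e'
      using less.hyps that by blast
    have M: "M \<in> lieset" using less.prems lie_homog_lieset by blast
    have right: "circ M N \<in> lie_homog k" if "N \<in> lie_homog j" "j < bracket_degree e" for N j
      using that(1) unfolding lie_homog_def[of j]
      by (rule circ_span_right)
        (use IH less.prems that(2) in \<open>auto simp: M bracket_eval_lieset subspace_lie_homog\<close>)
    have "circ M (comm ?A ?B)
        = circ (circ M ?A) ?B - circ M (circ ?A ?B) - circ (circ M ?B) ?A + circ M (circ ?B ?A)"
      using circ_comm_right[OF M bracket_eval_lieset bracket_eval_lieset] by simp
    moreover have "circ (circ M ?A) ?B \<in> lie_homog k" "circ (circ M ?B) ?A \<in> lie_homog k"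
      using IH less.prems smaller by blast+
    moreover have "circ M (circ ?A ?B) \<in> lie_homog k" "circ M (circ ?B ?A) \<in> lie_homog k"
      using right IH bracket_eval_lie_homog smaller by blast+
    ultimately show ?thesis
      using Brk by (auto intro!: sm.subspace_add sm.subspace_diff subspace_lie_homog)
  qed
qed

text \<open>For k = 1 this is the stability of Mag(V) under the action.\<close>
lemma circ_lie_homog:
  assumes "M \<in> lie_homog k" "l \<in> lieset"
  shows "circ M l \<in> lie_homog k"
  using assms(2) unfolding lieset_eq_span
  by (rule circ_span_right)
    (use assms(1) lie_homog_lieset
      in \<open>auto simp: bracket_eval_lieset subspace_lie_homog circ_bracket_lie_homog\<close>)

text \<open>L is a right module over the Lie algebra L_{,}.\<close>
lemma circ_pbr:
  assumes "x \<in> lieset" "y \<in> lieset" "z \<in> lieset"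
  shows "circ x (pbr circ comm y z) = circ (circ x y) z - circ (circ x z) y"
proof -
  have yz: "circ y z \<in> lieset" "circ z y \<in> lieset" "comm y z \<in> lieset"
    using assms by (auto intro: circ_lieset lieset.brk)
  have "circ x (pbr circ comm y z) = circ x (circ y z) - circ x (circ z y) + circ x (comm y z)"
    unfolding pbr_def using yz assms(1)
    by (simp add: circ_add_right circ_diff_right lieset_diff)
  also have "\<dots> = circ (circ x y) z - circ (circ x z) y"
    unfolding circ_comm_right[OF assms, symmetric] by (simp add: algebra_simps)
  finally show ?thesis .
qed

end

section \<open>The enveloping algebra\<close>

lemma subspace_uideal: "sm.subspace (uideal circ)"
  unfolding sm.subspace_def by (auto intro: uideal.zero uideal.add uideal.scal)

definition ueq :: "(('x, 'k::field) tensor \<Rightarrow> ('x, 'k) tensor \<Rightarrow> ('x, 'k) tensor)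
    \<Rightarrow> ('x, 'k) free_alg \<Rightarrow> ('x, 'k) free_alg \<Rightarrow> bool" where
  "ueq circ p q \<longleftrightarrow> p - q \<in> uideal circ"

lemma ueq_refl: "ueq circ p p"
  by (simp add: ueq_def uideal.zero)

lemma ueq_sym: "ueq circ p q \<Longrightarrow> ueq circ q p"
  unfolding ueq_def using sm.subspace_neg[OF subspace_uideal] by fastforce

lemma ueq_trans [trans]: "ueq circ p q \<Longrightarrow> ueq circ q r \<Longrightarrow> ueq circ p r"
  unfolding ueq_def using sm.subspace_add[OF subspace_uideal, of "p - q" circ "q - r"] by simp

lemma ueq_add: "ueq circ p1 q1 \<Longrightarrow> ueq circ p2 q2 \<Longrightarrow> ueq circ (p1 + p2) (q1 + q2)"
  unfolding ueq_def using sm.subspace_add[OF subspace_uideal, of "p1 - q1" circ "p2 - q2"]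
  by (simp add: algebra_simps)

lemma ueq_diff: "ueq circ p1 q1 \<Longrightarrow> ueq circ p2 q2 \<Longrightarrow> ueq circ (p1 - p2) (q1 - q2)"
  unfolding ueq_def using sm.subspace_diff[OF subspace_uideal, of "p1 - q1" circ "p2 - q2"]
  by (simp add: algebra_simps)

lemma ueq_sm: "ueq circ p q \<Longrightarrow> ueq circ (sm c p) (sm c q)"
  unfolding ueq_def using uideal.scal by (fastforce simp: sm.scale_right_diff_distrib)

lemma ueq_sum: "(\<And>i. i \<in> A \<Longrightarrow> ueq circ (f i) (g i)) \<Longrightarrow> ueq circ (sum f A) (sum g A)"
  by (induction A rule: infinite_finite_induct) (auto simp: ueq_refl ueq_add)

lemma ueq_last_add:
  assumes "set W \<subseteq> lieset" "l1 \<in> lieset" "l2 \<in> lieset"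
  shows "ueq circ (Poly_Mapping.single (W @ [l1 + l2]) c)
    (Poly_Mapping.single (W @ [l1]) c + Poly_Mapping.single (W @ [l2]) c)"
proof -
  have "sm c (Poly_Mapping.single (W @ [l1 + l2] @ []) 1 - Poly_Mapping.single (W @ [l1] @ []) 1
      - Poly_Mapping.single (W @ [l2] @ []) 1) \<in> uideal circ"
    using assms by (intro uideal.scal uideal.lin_add) auto
  then show ?thesis
    by (simp add: ueq_def sm.scale_right_diff_distrib sm_single algebra_simps)
qed

lemma ueq_last_sm:
  assumes "set W \<subseteq> lieset" "l \<in> lieset"
  shows "ueq circ (Poly_Mapping.single (W @ [sm d l]) c) (Poly_Mapping.single (W @ [l]) (c * d))"
proof -
  have "sm c (Poly_Mapping.single (W @ [sm d l] @ []) 1 - Poly_Mapping.single (W @ [l] @ []) d)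
      \<in> uideal circ"
    using assms by (intro uideal.scal uideal.lin_sm) auto
  then show ?thesis
    by (simp add: ueq_def sm.scale_right_diff_distrib sm_single)
qed

lemma ueq_last_diff:
  assumes "set W \<subseteq> lieset" "l1 \<in> lieset" "l2 \<in> lieset"
  shows "ueq circ (Poly_Mapping.single (W @ [l1 - l2]) c)
    (Poly_Mapping.single (W @ [l1]) c - Poly_Mapping.single (W @ [l2]) c)"
proof -
  have "ueq circ (Poly_Mapping.single (W @ [l1 + sm (-1) l2]) c)
      (Poly_Mapping.single (W @ [l1]) c + Poly_Mapping.single (W @ [sm (-1) l2]) c)"
    using assms by (intro ueq_last_add lieset.scal)
  also have "ueq circ \<dots>
      (Poly_Mapping.single (W @ [l1]) c + Poly_Mapping.single (W @ [l2]) (c * -1))"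
    using assms by (intro ueq_add ueq_refl ueq_last_sm)
  finally show ?thesis
    by (simp add: single_uminus)
qed

lemma ueq_last_swap:
  assumes "set W \<subseteq> lieset" "l1 \<in> lieset" "l2 \<in> lieset"
  shows "ueq circ (Poly_Mapping.single (W @ [l1, l2]) c)
    (Poly_Mapping.single (W @ [l2, l1]) c + Poly_Mapping.single (W @ [pbr circ comm l1 l2]) c)"
proof -
  have "sm c (Poly_Mapping.single (W @ [l1, l2] @ []) 1 - Poly_Mapping.single (W @ [l2, l1] @ []) 1
      - Poly_Mapping.single (W @ [pbr circ comm l1 l2] @ []) 1) \<in> uideal circ"
    using assms by (intro uideal.scal uideal.lie_rel) auto
  then show ?thesis
    by (simp add: ueq_def sm.scale_right_diff_distrib sm_single algebra_simps)
qed

lemma tmul_letter_uideal: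
  assumes "p \<in> uideal circ" "l \<in> lieset"
  shows "tmul p (Poly_Mapping.single [l] 1) \<in> uideal circ"
  using assms(1)
proof induction
  case (lin_add a b l1 l2)
  then show ?case
    using uideal.lin_add[where b = "b @ [l]"] assms(2)
    by (simp add: module_hom.diff[OF module_hom_tmul_left] tmul_single_single)
next
  case (lin_sm a b l1 c)
  then show ?case
    using uideal.lin_sm[where b = "b @ [l]"] assms(2)
    by (simp add: module_hom.diff[OF module_hom_tmul_left] tmul_single_single)
next
  case (lie_rel a b l1 l2)
  then show ?case
    using uideal.lie_rel[where b = "b @ [l]"] assms(2)
    by (simp add: module_hom.diff[OF module_hom_tmul_left] tmul_single_single)
next
  case zero
  then show ?case by (simp add: module_hom.zero[OF module_hom_tmul_left] uideal.zero)
next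
  case (add p q)
  then show ?case by (simp add: module_hom.add[OF module_hom_tmul_left] uideal.add)
next
  case (scal p c)
  then show ?case by (simp add: module_hom.scale[OF module_hom_tmul_left] uideal.scal)
qed

lemma ueq_tmul_letter:
  "ueq circ p q \<Longrightarrow> l \<in> lieset \<Longrightarrow>
   ueq circ (tmul p (Poly_Mapping.single [l] 1)) (tmul q (Poly_Mapping.single [l] 1))"
  unfolding ueq_def using tmul_letter_uideal
  by (fastforce simp: module_hom.diff[OF module_hom_tmul_left, symmetric])

context free_postlie_algebra
begin

text \<open>The defining relation xy - yx = {x,y} of U(L_{,}), with {x,y} split into its
  parts x \<circ> y - y \<circ> x and [x,y].\<close>
lemma ueq_last_comm:
  assumes "set W \<subseteq> lieset" "A \<in> lieset" "B \<in> lieset"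
  shows "ueq circ
    (Poly_Mapping.single (W @ [A, B]) c - Poly_Mapping.single (W @ [circ A B]) c
     - Poly_Mapping.single (W @ [B, A]) c + Poly_Mapping.single (W @ [circ B A]) c)
    (Poly_Mapping.single (W @ [comm A B]) c)"
proof -
  let ?s = "\<lambda>l. Poly_Mapping.single (W @ [l]) c"
  have AB: "circ A B \<in> lieset" "circ B A \<in> lieset" "comm A B \<in> lieset"
    using assms by (auto intro: circ_lieset lieset.brk)
  let ?r1 = "Poly_Mapping.single (W @ [A, B]) c
      - (Poly_Mapping.single (W @ [B, A]) c + ?s (pbr circ comm A B))"
  let ?r2 = "?s (pbr circ comm A B) - (?s (circ A B - circ B A) + ?s (comm A B))"
  let ?r3 = "?s (circ A B - circ B A) - (?s (circ A B) - ?s (circ B A))"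
  have "?r1 \<in> uideal circ"
    using ueq_last_swap[OF assms] by (simp add: ueq_def)
  moreover have "?r2 \<in> uideal circ"
    using ueq_last_add[OF assms(1) lieset_diff[OF AB(1,2)] AB(3)] by (simp add: ueq_def pbr_def)
  moreover have "?r3 \<in> uideal circ"
    using ueq_last_diff[OF assms(1) AB(1,2)] by (simp add: ueq_def)
  ultimately have "?r1 + ?r2 + ?r3 \<in> uideal circ"
    by (intro sm.subspace_add[OF subspace_uideal])
  then show ?thesis
    by (simp add: ueq_def algebra_simps)
qed

end

lemma actF_eq_lin_ext: "actF circ g = lin_ext (foldl circ g)"
  by (simp add: actF_def lin_ext_def fun_eq_iff)

lemma module_hom_actF: "module_hom sm sm (actF circ g)"
  unfolding actF_eq_lin_ext by (rule module_hom_lin_ext)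

lemma actF_single:
  "actF circ g (Poly_Mapping.single w (c::'k::comm_ring_1)) = sm c (foldl circ g w)"
  by (simp add: actF_eq_lin_ext)

context free_postlie_algebra
begin

lemma foldl_circ_lieset: "g \<in> lieset \<Longrightarrow> set w \<subseteq> lieset \<Longrightarrow> foldl circ g w \<in> lieset"
  by (induction w arbitrary: g) (auto simp: circ_lieset)

lemma foldl_circ_lie_homog: "g \<in> lie_homog k \<Longrightarrow> set w \<subseteq> lieset \<Longrightarrow> foldl circ g w \<in> lie_homog k"
  by (induction w arbitrary: g) (auto simp: circ_lie_homog)

lemma foldl_circ_add:
  "x \<in> lieset \<Longrightarrow> y \<in> lieset \<Longrightarrow> set w \<subseteq> lieset \<Longrightarrow>
   foldl circ (x + y) w = foldl circ x w + foldl circ y w"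
  by (induction w arbitrary: x y) (auto simp: circ_add_left circ_lieset)

lemma foldl_circ_sm:
  "x \<in> lieset \<Longrightarrow> set w \<subseteq> lieset \<Longrightarrow> foldl circ (sm c x) w = sm c (foldl circ x w)"
  by (induction w arbitrary: x) (auto simp: circ_sm_left circ_lieset)

lemma foldl_circ_diff:
  assumes "x \<in> lieset" "y \<in> lieset" "set w \<subseteq> lieset"
  shows "foldl circ (x - y) w = foldl circ x w - foldl circ y w"
  using foldl_circ_add[OF assms(1) lieset.scal[OF assms(2)] assms(3), of "-1"]
    foldl_circ_sm[OF assms(2,3), of "-1"]
  by simp

lemma actF_uideal:
  assumes "p \<in> uideal circ" "g \<in> lieset"
  shows "actF circ g p = 0"
  using assms(1)
proof induction
  case (lin_add a b l1 l2)
  let ?G = "foldl circ g a"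
  have G: "?G \<in> lieset" using foldl_circ_lieset[OF assms(2) lin_add(1)] .
  then show ?case
    using lin_add circ_lieset[OF G]
    by (simp add: module_hom.diff[OF module_hom_actF] actF_single circ_add_right foldl_circ_add)
next
  case (lin_sm a b l c)
  let ?G = "foldl circ g a"
  have G: "?G \<in> lieset" using foldl_circ_lieset[OF assms(2) lin_sm(1)] .
  then show ?case
    using lin_sm circ_lieset[OF G]
    by (simp add: module_hom.diff[OF module_hom_actF] actF_single circ_sm_right foldl_circ_sm)
next
  case (lie_rel a b l1 l2)
  let ?G = "foldl circ g a"
  have G: "?G \<in> lieset" using foldl_circ_lieset[OF assms(2) lie_rel(1)] .
  have "circ ?G (pbr circ comm l1 l2) = circ (circ ?G l1) l2 - circ (circ ?G l2) l1"
    using circ_pbr[OF G lie_rel(3,4)] .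
  then show ?case
    using lie_rel G
    by (simp add: module_hom.diff[OF module_hom_actF] actF_single foldl_circ_diff circ_lieset)
next
  case zero
  show ?case by (simp add: module_hom.zero[OF module_hom_actF])
next
  case (add p q)
  then show ?case by (simp add: module_hom.add[OF module_hom_actF])
next
  case (scal p c)
  then show ?case by (simp add: module_hom.scale[OF module_hom_actF])
qed

end

section \<open>Left combs\<close>

fun leftmost :: "'x mag \<Rightarrow> 'x" where
  "leftmost (Leaf x) = x"
| "leftmost (Node a b) = leftmost a"

fun spine :: "'x mag \<Rightarrow> 'x mag list" where
  "spine (Leaf x) = []"
| "spine (Node a b) = spine a @ [b]"

definition spine_word :: "'x mag \<Rightarrow> ('x, 'k::field) tensor list" where
  "spine_word t = map tree (spine t)"

lemma spine_word_simps [simp]: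
  "spine_word (Leaf x) = []"
  "spine_word (Node a b) = spine_word a @ [tree b]"
  by (simp_all add: spine_word_def)

lemma spine_word_lieset: "set (spine_word t) \<subseteq> lieset"
  by (auto simp: spine_word_def tree_lieset)

lemma (in free_postlie_algebra) foldl_circ_spine_word:
  "foldl circ (tree (Leaf (leftmost t))) (spine_word t) = tree t"
  by (induction t) (simp_all add: circ_tree)

definition spine_map :: "'x \<Rightarrow> ('x, 'k::field) tensor \<Rightarrow> ('x, 'k) free_alg" where
  "spine_map y = lin_ext (\<lambda>w. case w of
      [t] \<Rightarrow> Poly_Mapping.single (spine_word t) (of_bool (leftmost t = y))
    | _ \<Rightarrow> 0)"

lemma module_hom_spine_map: "module_hom sm sm (spine_map y)"
  unfolding spine_map_def by (rule module_hom_lin_ext)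

lemma spine_map_tree:
  "spine_map y (tree t) = Poly_Mapping.single (spine_word t) (of_bool (leftmost t = y))"
  by (simp add: spine_map_def tree_def)

context free_postlie_algebra
begin

definition spine_compatible :: "'x \<Rightarrow> ('x, 'k) tensor \<Rightarrow> bool" where
  "spine_compatible y l \<longleftrightarrow> (\<forall>t. ueq circ (spine_map y (circ (tree t) l))
      (Poly_Mapping.single (spine_word t @ [l]) (of_bool (leftmost t = y))))"

lemma subspace_spine_compatible: "sm.subspace {l \<in> lieset. spine_compatible y l}"
proof -
  let ?s = "\<lambda>t l. Poly_Mapping.single (spine_word t @ [l]) (of_bool (leftmost t = y) :: 'k)"
  have "spine_compatible y 0"
    unfolding spine_compatible_def
  proof
    fix t
    have "ueq circ (?s t (sm 0 0))
        (Poly_Mapping.single (spine_word t @ [0]) (of_bool (leftmost t = y) * 0))"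
      by (rule ueq_last_sm[OF spine_word_lieset lieset_zero])
    then show "ueq circ (spine_map y (circ (tree t) 0)) (?s t 0)"
      by (simp add: circ_zero_right tree_lieset module_hom.zero[OF module_hom_spine_map] ueq_sym)
  qed
  moreover have "spine_compatible y (l1 + l2)"
    if "l1 \<in> lieset" "l2 \<in> lieset" "spine_compatible y l1" "spine_compatible y l2" for l1 l2
    unfolding spine_compatible_def
  proof
    fix t
    have "spine_map y (circ (tree t) (l1 + l2))
        = spine_map y (circ (tree t) l1) + spine_map y (circ (tree t) l2)"
      using that(1,2)
      by (simp add: circ_add_right tree_lieset module_hom.add[OF module_hom_spine_map])
    also have "ueq circ \<dots> (?s t l1 + ?s t l2)"
      using that(3,4) by (intro ueq_add) (simp_all add: spine_compatible_def)
    also have "ueq circ \<dots> (?s t (l1 + l2))"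
      using ueq_last_add[OF spine_word_lieset that(1,2)] by (rule ueq_sym)
    finally show "ueq circ (spine_map y (circ (tree t) (l1 + l2))) (?s t (l1 + l2))" .
  qed
  moreover have "spine_compatible y (sm c l)" if "l \<in> lieset" "spine_compatible y l" for c l
    unfolding spine_compatible_def
  proof
    fix t
    have "spine_map y (circ (tree t) (sm c l)) = sm c (spine_map y (circ (tree t) l))"
      using that(1)
      by (simp add: circ_sm_right tree_lieset module_hom.scale[OF module_hom_spine_map])
    also have "ueq circ \<dots> (sm c (?s t l))"
      using that(2) by (intro ueq_sm) (simp add: spine_compatible_def)
    also have "\<dots> = Poly_Mapping.single (spine_word t @ [l]) (of_bool (leftmost t = y) * c)"
      by (simp add: sm_single mult.commute)
    also have "ueq circ \<dots> (?s t (sm c l))"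
      using ueq_last_sm[OF spine_word_lieset that(1)] by (rule ueq_sym)
    finally show "ueq circ (spine_map y (circ (tree t) (sm c l))) (?s t (sm c l))" .
  qed
  ultimately show ?thesis
    by (auto simp: sm.subspace_def lieset_zero intro: lieset.add lieset.scal)
qed

lemma spine_compatible_span:
  assumes "p \<in> sm.span A" "A \<subseteq> lieset" "\<And>a. a \<in> A \<Longrightarrow> spine_compatible y a"
  shows "spine_compatible y p"
  using sm.span_minimal[OF _ subspace_spine_compatible, of A y] assms by blast

lemma spine_map_circ:
  assumes "spine_compatible y l" "l \<in> lieset" "M \<in> lie_homog 1"
  shows "ueq circ (spine_map y (circ M l)) (tmul (spine_map y M) (Poly_Mapping.single [l] 1))"
proof -
  let ?f = "\<lambda>M. spine_map y (circ M l) - tmul (spine_map y M) (Poly_Mapping.single [l] 1)"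
  have "?f M \<in> uideal circ"
  proof (rule linear_on_span_mem[where f = ?f, OF subspace_lieset _ subspace_uideal])
    show "range tree \<subseteq> lieset" using tree_lieset by blast
    show "M \<in> sm.span (range tree)" using assms(3) unfolding lie_homog_1 .
    show "?f (x + z) = ?f x + ?f z" if "x \<in> lieset" "z \<in> lieset" for x z
      using that assms(2)
      by (simp add: circ_add_left module_hom.add[OF module_hom_spine_map]
          module_hom.add[OF module_hom_tmul_left] algebra_simps)
    show "?f (sm c x) = sm c (?f x)" if "x \<in> lieset" for c x
      using that assms(2)
      by (simp add: circ_sm_left module_hom.scale[OF module_hom_spine_map]
          module_hom.scale[OF module_hom_tmul_left] sm.scale_right_diff_distrib)
    show "?f a \<in> uideal circ" if "a \<in> range tree" for a
      using that assms(1)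
      by (auto simp: spine_compatible_def ueq_def spine_map_tree tmul_single_single)
  qed
  then show ?thesis by (simp add: ueq_def)
qed

lemma spine_map_circ_circ:
  assumes "spine_compatible y X" "spine_compatible y Z" "X \<in> lieset" "Z \<in> lieset"
  shows "ueq circ (spine_map y (circ (circ (tree t) X) Z))
    (Poly_Mapping.single (spine_word t @ [X, Z]) (of_bool (leftmost t = y)))"
proof -
  have "circ (tree t) X \<in> lie_homog 1"
    using circ_lie_homog[OF tree_lie_homog assms(3)] .
  then have "ueq circ (spine_map y (circ (circ (tree t) X) Z))
      (tmul (spine_map y (circ (tree t) X)) (Poly_Mapping.single [Z] 1))"
    using spine_map_circ assms(2,4) by blast
  also have "ueq circ \<dots> (tmul (Poly_Mapping.single (spine_word t @ [X]) (of_bool (leftmost t = y)))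
      (Poly_Mapping.single [Z] 1))"
    using assms(1,4) by (intro ueq_tmul_letter) (simp_all add: spine_compatible_def)
  also have "\<dots> = Poly_Mapping.single (spine_word t @ [X, Z]) (of_bool (leftmost t = y))"
    by (simp add: tmul_single_single)
  finally show ?thesis .
qed

lemma spine_compatible_bracket: "spine_compatible y (bracket_eval e)"
proof (induction "bracket_degree e" arbitrary: e rule: less_induct)
  case less
  show ?case
  proof (cases e)
    case (Gen s)
    then show ?thesis by (simp add: spine_compatible_def circ_tree spine_map_tree ueq_refl)
  next
    case (Brk a b)
    let ?A = "bracket_eval a" and ?B = "bracket_eval b"
    have smaller: "bracket_degree a < bracket_degree e" "bracket_degree b < bracket_degree e"
      using Brk bracket_degree_pos[of a] bracket_degree_pos[of b] by auto
    have lower: "spine_compatible y N" if "N \<in> lie_homog j" "j < bracket_degree e" for N j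
      using that(1) unfolding lie_homog_def
      by (rule spine_compatible_span) (use less.hyps that(2) bracket_eval_lieset in auto)
    have A: "?A \<in> lieset" "spine_compatible y ?A" and B: "?B \<in> lieset" "spine_compatible y ?B"
      using lower[OF bracket_eval_lie_homog] smaller bracket_eval_lieset by auto
    have AB: "spine_compatible y (circ ?A ?B)" "spine_compatible y (circ ?B ?A)"
      using lower[OF circ_lie_homog[OF bracket_eval_lie_homog]] smaller A(1) B(1) by auto
    show ?thesis
      unfolding spine_compatible_def
    proof
      fix t :: "'x mag"
      let ?G = "tree t"
      let ?s = "\<lambda>w. Poly_Mapping.single (spine_word t @ w) (of_bool (leftmost t = y))"
      have "spine_map y (circ ?G (comm ?A ?B))
          = spine_map y (circ (circ ?G ?A) ?B) - spine_map y (circ ?G (circ ?A ?B))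
            - spine_map y (circ (circ ?G ?B) ?A) + spine_map y (circ ?G (circ ?B ?A))"
        unfolding circ_comm_right[OF tree_lieset A(1) B(1), symmetric]
        by (simp add: module_hom.add[OF module_hom_spine_map]
            module_hom.diff[OF module_hom_spine_map])
      also have "ueq circ \<dots> (?s [?A, ?B] - ?s [circ ?A ?B] - ?s [?B, ?A] + ?s [circ ?B ?A])"
        using A B AB
        by (intro ueq_add ueq_diff spine_map_circ_circ) (auto simp: spine_compatible_def)
      also have "ueq circ \<dots> (?s [comm ?A ?B])"
        using ueq_last_comm[OF spine_word_lieset A(1) B(1)] by simp
      finally show "ueq circ (spine_map y (circ ?G (bracket_eval e))) (?s [bracket_eval e])"
        using Brk by simp
    qed
  qed
qed

lemma spine_compatible: "l \<in> lieset \<Longrightarrow> spine_compatible y l"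
  unfolding lieset_eq_span
  by (rule spine_compatible_span) (auto simp: bracket_eval_lieset spine_compatible_bracket)

lemma spine_map_foldl:
  assumes "set w \<subseteq> lieset"
  shows "ueq circ (spine_map y (foldl circ (tree (Leaf x)) w))
    (Poly_Mapping.single w (of_bool (x = y)))"
  using assms
proof (induction w rule: rev_induct)
  case Nil
  show ?case by (simp only: foldl_Nil spine_map_tree spine_word_simps leftmost.simps ueq_refl)
next
  case (snoc l w)
  have l: "l \<in> lieset" and w: "set w \<subseteq> lieset" using snoc.prems by auto
  have "foldl circ (tree (Leaf x)) w \<in> lie_homog 1"
    using foldl_circ_lie_homog[OF tree_lie_homog w] .
  then have "ueq circ (spine_map y (foldl circ (tree (Leaf x)) (w @ [l])))
      (tmul (spine_map y (foldl circ (tree (Leaf x)) w)) (Poly_Mapping.single [l] 1))"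
    using spine_map_circ[OF spine_compatible[OF l] l] by simp
  also have "ueq circ \<dots>
      (tmul (Poly_Mapping.single w (of_bool (x = y))) (Poly_Mapping.single [l] 1))"
    using snoc.IH[OF w] l by (rule ueq_tmul_letter)
  also have "\<dots> = Poly_Mapping.single (w @ [l]) (of_bool (x = y))"
    by (simp add: tmul_single_single)
  finally show ?case .
qed

lemma spine_map_actF:
  assumes "f \<in> wordsL"
  shows "ueq circ (spine_map y (actF circ (tree (Leaf x)) f)) (sm (of_bool (x = y)) f)"
proof -
  have "spine_map y (actF circ (tree (Leaf x)) f) = (\<Sum>w\<in>Poly_Mapping.keys f.
      sm (Poly_Mapping.lookup f w) (spine_map y (foldl circ (tree (Leaf x)) w)))"
    by (simp add: actF_def module_hom.sum[OF module_hom_spine_map]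
        module_hom.scale[OF module_hom_spine_map])
  also have "ueq circ \<dots> (\<Sum>w\<in>Poly_Mapping.keys f.
      sm (Poly_Mapping.lookup f w) (Poly_Mapping.single w (of_bool (x = y))))"
    using assms unfolding wordsL_def by (intro ueq_sum ueq_sm spine_map_foldl) auto
  also have "\<dots> = sm (of_bool (x = y)) f"
    by (subst (3) sum_single_lookup[symmetric])
      (simp add: sm.scale_sum_right sm_single mult.commute)
  finally show ?thesis .
qed

end

lemma subspace_wordsL: "sm.subspace wordsL"
  unfolding sm.subspace_def
proof (intro conjI ballI allI)
  show "0 \<in> wordsL" by (simp add: wordsL_def)
  show "p + q \<in> wordsL" if "p \<in> wordsL" "q \<in> wordsL" for p q
    using that keys_add[of p q] unfolding wordsL_def by blast
  show "sm c p \<in> wordsL" if "p \<in> wordsL" for c p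
    using that unfolding wordsL_def by (auto simp: in_keys_iff)
qed

lemma single_wordsL: "set w \<subseteq> lieset \<Longrightarrow> Poly_Mapping.single w c \<in> wordsL"
  by (simp add: wordsL_def)

lemma canmap_add: "canmap circ (u + v) = canmap circ u + canmap circ v"
  unfolding canmap_def
  by (rule setsum_keys_plus_distrib)
    (simp_all add: module_hom.add[OF module_hom_actF] module_hom.zero[OF module_hom_actF])

lemma canmap_zero [simp]: "canmap circ 0 = 0"
  by (simp add: canmap_def)

lemma canmap_sum: "canmap circ (sum f A) = (\<Sum>i\<in>A. canmap circ (f i))"
  by (induction A rule: infinite_finite_induct) (simp_all add: canmap_add)

lemma canmap_single: "canmap circ (Poly_Mapping.single x f) = actF circ (tree (Leaf x)) f"
  by (cases "f = 0") (simp_all add: canmap_def tree_def module_hom.zero[OF module_hom_actF])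

context free_postlie_algebra
begin

lemma canmap_surj:
  assumes "m \<in> magset"
  shows "\<exists>u. (\<forall>x. Poly_Mapping.lookup u x \<in> wordsL) \<and> canmap circ u = m"
proof -
  define u where "u = (\<Sum>w\<in>Poly_Mapping.keys m. Poly_Mapping.single (leftmost (hd w))
      (Poly_Mapping.single (spine_word (hd w) :: ('x, 'k) tensor list) (Poly_Mapping.lookup m w)))"
  have "Poly_Mapping.lookup u x \<in> wordsL" for x
    unfolding u_def lookup_sum
    by (intro sm.subspace_sum[OF subspace_wordsL])
      (auto simp: lookup_single when_def single_wordsL spine_word_lieset
        sm.subspace_0[OF subspace_wordsL])
  moreover have "canmap circ u = m"
  proof -
    have "canmap circ u = (\<Sum>w\<in>Poly_Mapping.keys m.
        actF circ (tree (Leaf (leftmost (hd w))))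
          (Poly_Mapping.single (spine_word (hd w)) (Poly_Mapping.lookup m w)))"
      by (simp add: u_def canmap_sum canmap_single)
    also have "\<dots> = (\<Sum>w\<in>Poly_Mapping.keys m. Poly_Mapping.single w (Poly_Mapping.lookup m w))"
    proof (rule sum.cong[OF refl])
      fix w assume "w \<in> Poly_Mapping.keys m"
      with assms obtain t where "w = [t]"
        unfolding magset_def by (auto simp: length_Suc_conv)
      then show "actF circ (tree (Leaf (leftmost (hd w))))
          (Poly_Mapping.single (spine_word (hd w)) (Poly_Mapping.lookup m w))
        = Poly_Mapping.single w (Poly_Mapping.lookup m w)"
        by (simp add: actF_single foldl_circ_spine_word) (simp add: tree_def sm_single)
    qed
    also have "\<dots> = m" by (rule sum_single_lookup)
    finally show ?thesis .
  qed
  ultimately show ?thesis by blast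
qed

lemma canmap_eq_0_iff:
  assumes "\<forall>x. Poly_Mapping.lookup u x \<in> wordsL"
  shows "canmap circ u = 0 \<longleftrightarrow> (\<forall>x. Poly_Mapping.lookup u x \<in> uideal circ)"
proof
  assume "\<forall>x. Poly_Mapping.lookup u x \<in> uideal circ"
  then show "canmap circ u = 0"
    by (simp add: canmap_def actF_uideal[OF _ lieset.gen])
next
  assume zero: "canmap circ u = 0"
  show "\<forall>y. Poly_Mapping.lookup u y \<in> uideal circ"
  proof
    fix y
    have "spine_map y (canmap circ u) = (\<Sum>x\<in>Poly_Mapping.keys u.
        spine_map y (actF circ (tree (Leaf x)) (Poly_Mapping.lookup u x)))"
      by (simp add: canmap_def tree_def module_hom.sum[OF module_hom_spine_map])
    also have "ueq circ \<dots> (\<Sum>x\<in>Poly_Mapping.keys u. sm (of_bool (x = y)) (Poly_Mapping.lookup u x))"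
      using assms by (intro ueq_sum spine_map_actF) auto
    also have "\<dots> = (\<Sum>x\<in>Poly_Mapping.keys u. if x = y then Poly_Mapping.lookup u x else 0)"
      by (rule sum.cong) auto
    also have "\<dots> = Poly_Mapping.lookup u y"
      by (simp add: in_keys_iff)
    finally have "ueq circ 0 (Poly_Mapping.lookup u y)"
      using zero by (simp add: module_hom.zero[OF module_hom_spine_map])
    then show "Poly_Mapping.lookup u y \<in> uideal circ"
      unfolding ueq_def using sm.subspace_neg[OF subspace_uideal] by fastforce
  qed
qed

end

theorem mainTheorem17:
  fixes circ :: "('x mag list \<Rightarrow>\<^sub>0 'k::field_char_0) \<Rightarrow> ('x mag list \<Rightarrow>\<^sub>0 'k) \<Rightarrow> ('x mag list \<Rightarrow>\<^sub>0 'k)"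
  assumes "free_postlie circ"
  shows "(\<forall>m\<in>magset. \<exists>u. (\<forall>x. Poly_Mapping.lookup u x \<in> wordsL) \<and> canmap circ u = m)
       \<and> (\<forall>u. (\<forall>x. Poly_Mapping.lookup u x \<in> wordsL) \<longrightarrow>
              (canmap circ u = 0 \<longleftrightarrow> (\<forall>x. Poly_Mapping.lookup u x \<in> uideal circ)))"
proof -
  interpret free_postlie_algebra circ
    using assms by unfold_locales
  show ?thesis
    using canmap_surj canmap_eq_0_iff by blast
qed

end
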